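(* In the torn-paper channel with lost pieces described in the context, with any distribution on the input $X^n$, there is a finite constant $S$ such that for all integers $J>L\ge1$ and every $\delta>0$, $$\lim_{n\to\infty}\frac{H({\mathcal Y}_{\ge J})}{n}\le 2\big(S\sqrt{L/J}+\delta\big).$$
   Context: All logarithms are base 2 and $H(\cdot)$ denotes Shannon entropy. Channel model: the input is a binary string $X^n$. Let $N_1,N_2,\dots$ be i.i.d. positive-integer random variables (distribution may depend on $n$) with $E[N_1]=\ell_n$, where $\alpha:=\lim_{n\to\infty}(\log n)/\ell_n\in(0,\infty)$. $X^n$ is cut into $K$ consecutive fragments $\vec X_1,\dots,\vec X_K$ of lengths $N_1,\dots,N_K$ ($K$ random, last length truncated so that the lengths sum to $n$). Each fragment is independently deleted with probability $d(N_i)$ for a given $d:\mathbb{Z}_{>0}\to[0,1]$; ${\mathcal Y}$ is the multiset of non-deleted fragments. ${\mathcal Y}_{\ge J}$ is the sub-multiset of fragments in ${\mathcal Y}$ with $N_i\ge (J/L)\log n$. Standing regularity assumptions: $E[N_1/\log n]$ and $E[(N_1/\log n)^2]$ are bounded in $n$. *)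

theory Defs
  imports "HOL-Probability.Probability" "HOL-Library.Multiset"
begin

definition entropy_pmf :: "'a pmf \<Rightarrow> real" where
  "entropy_pmf p = - (\<Sum>x\<in>set_pmf p. pmf p x * log 2 (pmf p x))"

primrec iid_list :: "nat \<Rightarrow> 'a pmf \<Rightarrow> 'a list pmf" where
  "iid_list 0 p = return_pmf []"
| "iid_list (Suc m) p = do { x \<leftarrow> p; xs \<leftarrow> iid_list m p; return_pmf (x # xs) }"

fun frags :: "nat list \<Rightarrow> 'a list \<Rightarrow> (nat \<times> 'a list) list" where
  "frags [] xs = []"
| "frags (k # ks) xs = (if xs = [] then [] else (k, take k xs) # frags ks (drop k xs))"

primrec keep :: "(nat \<Rightarrow> real) \<Rightarrow> (nat \<times> 'a list) list \<Rightarrow> (nat \<times> 'a list) multiset pmf" where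
  "keep d [] = return_pmf {#}"
| "keep d (f # fs) = do { b \<leftarrow> bernoulli_pmf (1 - d (fst f)); M \<leftarrow> keep d fs;
                          return_pmf (if b then add_mset f M else M) }"

text \<open>P n: input distribution of X^n; Nd n: distribution of N_1 (depending on n).
  Since every N_i \<ge> 1, n draws of fragment lengths suffice to cover X^n.\<close>
definition Y_ge :: "(nat \<Rightarrow> bool list pmf) \<Rightarrow> (nat \<Rightarrow> nat pmf) \<Rightarrow> (nat \<Rightarrow> real)
    \<Rightarrow> nat \<Rightarrow> nat \<Rightarrow> nat \<Rightarrow> bool list multiset pmf" where
  "Y_ge P Nd d J L n = do {
      x \<leftarrow> P n;
      ks \<leftarrow> iid_list n (Nd n);
      M \<leftarrow> keep d (frags ks x);
      return_pmf (image_mset snd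
         (filter_mset (\<lambda>f. real (fst f) \<ge> (real J / real L) * log 2 (real n)) M)) }"

end

theory Submission
  imports Defs
begin

(* Gibbs' inequality bounds the entropy of the surviving long fragments by the expected length of
   an injective binary encoding of them; a self-delimiting code spends 2 (2 |s| + 1) bits on a
   fragment s, so H(Y_{>=J}) <= 6 E[sum N_i] + 1, the sum running over the fragments cut from X^n
   with N_i >= t = (J/L) log n. A Wald-type supermartingale argument bounds this expectation by
   2 n E[N 1{N >= t}] / E[min N n]. With B bounding E[(N / log n)^2], the numerator is at most
   E[N^2] / t <= B (L/J) log n, while the denominator is at least E[N] - E[N^2] / n ~ (log n) / alpha.
   Hence limsup H(Y_{>=J}) / n <= 12 B alpha L/J, which is even linear in L/J. *)

lemma le_sqrt_self:
  fixes x :: real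
  assumes "0 \<le> x" and "x \<le> 1"
  shows "x \<le> sqrt x"
proof -
  have "sqrt x * sqrt x \<le> sqrt x * 1"
    using assms by (intro mult_left_mono) simp_all
  then show ?thesis
    using assms by simp
qed

lemma sum_mset_mono_subseteq:
  fixes f :: "'a \<Rightarrow> 'b :: ordered_comm_monoid_add"
  assumes "M \<subseteq># N" and "\<And>x. x \<in># N \<Longrightarrow> 0 \<le> f x"
  shows "(\<Sum>x\<in>#M. f x) \<le> (\<Sum>x\<in>#N. f x)"
proof -
  obtain R where N: "N = M + R"
    using assms(1) by (metis subset_mset.le_iff_add)
  have "0 \<le> (\<Sum>x\<in>#R. f x)"
    using assms(2) unfolding N by (induction R) (auto intro: add_nonneg_nonneg)
  then show ?thesis
    unfolding N by (simp add: add_increasing2)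
qed

lemma entropy_pmf_le_cross_entropy:
  fixes p :: "'a pmf" and q :: "'a \<Rightarrow> real"
  assumes fin: "finite (set_pmf p)" and q_pos: "\<And>x. x \<in> set_pmf p \<Longrightarrow> 0 < q x"
    and q_sum: "(\<Sum>x\<in>set_pmf p. q x) \<le> 1"
  shows "entropy_pmf p \<le> (\<Sum>x\<in>set_pmf p. pmf p x * - log 2 (q x))"
proof -
  have term_le: "(pmf p x - q x) / ln 2 \<le> pmf p x * - log 2 (q x) + pmf p x * log 2 (pmf p x)"
    if x: "x \<in> set_pmf p" for x
  proof -
    have p_pos: "0 < pmf p x" and "0 < q x" using x q_pos by (auto simp: pmf_positive)
    have "pmf p x * (ln (q x) - ln (pmf p x)) = pmf p x * ln (q x / pmf p x)"
      using p_pos \<open>0 < q x\<close> by (simp add: ln_div)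
    also have "\<dots> \<le> pmf p x * (q x / pmf p x - 1)"
      using p_pos \<open>0 < q x\<close> by (intro mult_left_mono ln_le_minus_one) auto
    also have "\<dots> = q x - pmf p x"
      using p_pos by (simp add: field_simps)
    finally have "(pmf p x - q x) / ln 2 \<le> pmf p x * (ln (pmf p x) - ln (q x)) / ln 2"
      by (intro divide_right_mono) (simp_all add: algebra_simps)
    then show ?thesis
      by (simp add: log_def field_simps)
  qed
  have "0 \<le> ((\<Sum>x\<in>set_pmf p. pmf p x) - (\<Sum>x\<in>set_pmf p. q x)) / ln 2"
    using q_sum sum_pmf_eq_1[OF fin order_refl] by simp
  also have "\<dots> = (\<Sum>x\<in>set_pmf p. (pmf p x - q x) / ln 2)"
    by (simp add: sum_divide_distrib[symmetric] sum_subtractf)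
  also have "\<dots> \<le> (\<Sum>x\<in>set_pmf p. pmf p x * - log 2 (q x) + pmf p x * log 2 (pmf p x))"
    by (intro sum_mono term_le)
  finally show ?thesis
    unfolding entropy_pmf_def by (simp add: sum.distrib sum_subtractf sum_negf)
qed

lemma sum_bool_lists_length_eq:
  "(\<Sum>w\<in>{w :: bool list. length w = k}. (1/2::real) ^ (2 * length w + 1)) = (1/2) ^ (k + 1)"
proof -
  have "card {w :: bool list. length w = k} = 2 ^ k"
    using card_lists_length_eq[of "UNIV :: bool set" k] by simp
  moreover have "(1/2::real) ^ (2 * k + 1) = (1/4) ^ k / 2"
    by (simp add: power_mult power_add power2_eq_square)
  moreover have "(2::real) ^ k * (1/4) ^ k = (1/2) ^ k"
    by (simp flip: power_mult_distrib)
  ultimately show ?thesis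
    by simp
qed

lemma sum_bool_lists_le_1:
  assumes "finite (A :: bool list set)"
  shows "(\<Sum>w\<in>A. (1/2::real) ^ (2 * length w + 1)) \<le> 1"
proof -
  obtain m where A: "A \<subseteq> (\<Union>k\<le>m. {w. length w = k})"
    using assms finite_nat_set_iff_bounded_le[of "length ` A"] by auto
  have fin: "finite {w :: bool list. length w = k}" for k
    using finite_lists_length_eq[of "UNIV :: bool set" k] by simp
  have "(\<Sum>w\<in>A. (1/2::real) ^ (2 * length w + 1))
      \<le> (\<Sum>w\<in>(\<Union>k\<le>m. {w :: bool list. length w = k}). (1/2) ^ (2 * length w + 1))"
    by (rule sum_mono2) (use A in \<open>auto intro: fin\<close>)
  also have "\<dots> = (\<Sum>k\<le>m. \<Sum>w\<in>{w :: bool list. length w = k}. (1/2) ^ (2 * length w + 1))"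
    by (rule sum.UNION_disjoint) (auto intro: fin)
  also have "\<dots> = (\<Sum>k\<le>m. (1/2) ^ (k + 1))"
    by (simp only: sum_bool_lists_length_eq)
  also have "\<dots> = 1 - (1/2) ^ (m + 1)"
    by (induction m) simp_all
  also have "\<dots> \<le> 1"
    by simp
  finally show ?thesis .
qed

lemma entropy_pmf_le_code_length:
  fixes c :: "'a \<Rightarrow> bool list"
  assumes fin: "finite (set_pmf p)" and inj: "inj_on c (set_pmf p)"
  shows "entropy_pmf p \<le> (\<Sum>x\<in>set_pmf p. pmf p x * real (2 * length (c x) + 1))"
proof -
  have "(\<Sum>x\<in>set_pmf p. (1/2::real) ^ (2 * length (c x) + 1))
      = (\<Sum>w\<in>c ` set_pmf p. (1/2) ^ (2 * length w + 1))"
    using inj by (simp add: sum.reindex)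
  also have "\<dots> \<le> 1"
    using fin by (intro sum_bool_lists_le_1 finite_imageI)
  finally show ?thesis
    using entropy_pmf_le_cross_entropy[OF fin, of "\<lambda>x. (1/2) ^ (2 * length (c x) + 1)"]
    by (simp add: log_nat_power log_divide)
qed

definition bits_code :: "bool list \<Rightarrow> bool list" where
  "bits_code s = concat (map (\<lambda>b. [True, b]) s) @ [False]"

fun bits_decode :: "bool list \<Rightarrow> bool list list" where
  "bits_decode [] = []"
| "bits_decode (False # r) = [] # bits_decode r"
| "bits_decode [True] = []"
| "bits_decode (True # b # r) =
     (case bits_decode r of [] \<Rightarrow> [[b]] | s # ss \<Rightarrow> (b # s) # ss)"

lemma bits_decode_code_append: "bits_decode (bits_code s @ r) = s # bits_decode r"
  by (induction s) (auto simp: bits_code_def)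

lemma bits_decode_concat_code: "bits_decode (concat (map bits_code ss)) = ss"
  by (induction ss) (auto simp: bits_decode_code_append)

lemma length_bits_code: "length (bits_code s) = 2 * length s + 1"
  by (induction s) (auto simp: bits_code_def)

definition mset_code :: "bool list multiset \<Rightarrow> bool list" where
  "mset_code M = concat (map bits_code (SOME ss. mset ss = M))"

lemma mset_some_list: "mset (SOME ss. mset ss = M) = M"
  by (metis (mono_tags) ex_mset someI_ex)

lemma inj_mset_code: "inj mset_code"
proof (rule injI)
  fix M N
  assume "mset_code M = mset_code N"
  then have "(SOME ss. mset ss = M) = (SOME ss. mset ss = N)"
    unfolding mset_code_def by (metis bits_decode_concat_code)
  then show "M = N"
    by (metis mset_some_list)
qed

lemma length_mset_code: "length (mset_code M) = (\<Sum>s\<in>#M. 2 * length s + 1)"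
proof -
  have "length (concat (map bits_code ss)) = (\<Sum>s\<in>#mset ss. 2 * length s + 1)" for ss
    by (induction ss) (auto simp: length_bits_code)
  then show ?thesis
    unfolding mset_code_def by (simp add: mset_some_list)
qed

lemma length_iid_list: "ks \<in> set_pmf (iid_list m p) \<Longrightarrow> length ks = m"
  by (induction m arbitrary: ks) auto

lemma length_frags_le: "length (frags ks xs) \<le> length ks"
  by (induction ks arbitrary: xs) auto

lemma length_snd_frags_le:
  "f \<in> set (frags ks xs) \<Longrightarrow> length (snd f) \<le> fst f \<and> length (snd f) \<le> length xs"
  by (induction ks arbitrary: xs) (auto split: if_splits, metis diff_le_self le_trans length_drop)

lemma keep_subseteq: "M \<in> set_pmf (keep d fs) \<Longrightarrow> M \<subseteq># mset fs"
proof (induction fs arbitrary: M)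
  case (Cons f fs)
  then obtain b M' where "M' \<subseteq># mset fs" and "M = (if b then add_mset f M' else M')"
    by auto
  then show ?case
    by (auto intro: subset_mset.order_trans[OF _ multi_psub_of_add_self[THEN subset_mset.less_imp_le]])
qed simp

lemma finite_set_pmf_Y_ge:
  assumes input: "set_pmf (P n) \<subseteq> {xs. length xs = n}"
  shows "finite (set_pmf (Y_ge P Nd d J L n))"
proof (rule finite_subset)
  show "set_pmf (Y_ge P Nd d J L n) \<subseteq> (\<Union>j\<le>n. multisets_of_size {w :: bool list. length w \<le> n} j)"
  proof
    fix M
    assume "M \<in> set_pmf (Y_ge P Nd d J L n)"
    then obtain x ks M0 Q where x: "x \<in> set_pmf (P n)" and ks: "ks \<in> set_pmf (iid_list n (Nd n))"
      and M0: "M0 \<in> set_pmf (keep d (frags ks x))" and M: "M = image_mset snd (filter_mset Q M0)"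
      unfolding Y_ge_def by auto
    have sub: "M \<subseteq># image_mset snd (mset (frags ks x))"
      unfolding M using keep_subseteq[OF M0]
      by (intro image_mset_subseteq_mono) (rule subset_mset.order_trans[OF multiset_filter_subset])
    have "size M \<le> n"
      using size_mset_mono[OF sub] length_frags_le[of ks x] length_iid_list[OF ks] by simp
    moreover have "set_mset M \<subseteq> {w. length w \<le> n}"
      using set_mset_mono[OF sub] length_snd_frags_le[of _ ks x] x input by fastforce
    ultimately show "M \<in> (\<Union>j\<le>n. multisets_of_size {w. length w \<le> n} j)"
      unfolding multisets_of_size_def by auto
  qed
  show "finite (\<Union>j\<le>n. multisets_of_size {w :: bool list. length w \<le> n} j)"
    using finite_lists_length_le[of "UNIV :: bool set" n] by (intro finite_UN_I) auto
qed

(* Unlike the fragments themselves, this depends only on the lengths and on r = |X^n|, so it can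
   be averaged over the lengths independently of the input string (see cut_sum_length_eq). *)
fun cut_sum :: "(nat \<Rightarrow> real) \<Rightarrow> nat list \<Rightarrow> nat \<Rightarrow> real" where
  "cut_sum g [] r = 0"
| "cut_sum g (k # ks) r = (if r = 0 then 0 else g k + cut_sum g ks (r - k))"

lemma cut_sum_length_eq: "cut_sum g ks (length xs) = (\<Sum>f\<leftarrow>frags ks xs. g (fst f))"
  by (induction ks arbitrary: xs) (auto, metis length_drop)

lemma cut_sum_nonneg: "(\<And>k. 0 \<le> g k) \<Longrightarrow> 0 \<le> cut_sum g ks r"
  by (induction ks arbitrary: r) auto

lemma cut_sum_zero [simp]: "cut_sum g ks 0 = 0"
  by (cases ks) auto

(* Phi s = c (s + R), with c = E g / E[min k R], is a supermartingale potential: cutting a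
   fragment of length k costs g k and lowers Phi by at least c min k R, which is E g on average. *)
lemma expectation_potential_step:
  fixes p :: "nat pmf" and g :: "nat \<Rightarrow> real" and r R :: nat
  defines "c \<equiv> measure_pmf.expectation p g / measure_pmf.expectation p (\<lambda>k. real (min k R))"
  assumes g_nonneg: "\<And>k. 0 \<le> g k" and \<mu>_pos: "0 < measure_pmf.expectation p (\<lambda>k. real (min k R))"
    and "r \<le> R"
  shows "measure_pmf.expectation p g
           + measure_pmf.expectation p (\<lambda>k. if r \<le> k then 0 else c * (real (r - k) + real R))
         \<le> c * (real r + real R)"
proof -
  have c: "0 \<le> c"
    unfolding c_def using g_nonneg \<mu>_pos by (simp add: integral_nonneg_AE)
  have min_int: "integrable p (\<lambda>k. real (min k R))"
    by (intro measure_pmf.integrable_const_bound[where B = "real R"]) auto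
  have "measure_pmf.expectation p (\<lambda>k. if r \<le> k then 0 else c * (real (r - k) + real R))
      \<le> measure_pmf.expectation p (\<lambda>k. c * (real r + real R) - c * real (min k R))"
  proof (rule integral_mono)
    show "integrable p (\<lambda>k. if r \<le> k then 0 else c * (real (r - k) + real R))"
      using c by (intro measure_pmf.integrable_const_bound[where B = "c * (real r + real R)"])
        (auto intro!: mult_left_mono)
    show "(if r \<le> k then 0 else c * (real (r - k) + real R)) \<le> c * (real r + real R) - c * real (min k R)"
      for k
    proof (cases "r \<le> k")
      case True
      have "c * real (min k R) \<le> c * (real r + real R)"
        using c by (intro mult_left_mono) auto
      then show ?thesis
        using True by simp
    qed (use \<open>r \<le> R\<close> in \<open>simp add: algebra_simps\<close>)
  qed (use min_int in auto)
  also have "\<dots> = c * (real r + real R) - measure_pmf.expectation p g"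
    using min_int \<mu>_pos by (simp add: c_def)
  finally show ?thesis
    by simp
qed

lemma nn_integral_cut_sum_le:
  fixes p :: "nat pmf" and g :: "nat \<Rightarrow> real" and r R m :: nat
  defines "\<mu> \<equiv> measure_pmf.expectation p (\<lambda>k. real (min k R))"
  assumes g_nonneg: "\<And>k. 0 \<le> g k" and g_int: "integrable p g" and \<mu>_pos: "0 < \<mu>"
    and "r \<le> R"
  shows "(\<integral>\<^sup>+ks. cut_sum g ks r \<partial>iid_list m p)
           \<le> (if r = 0 then 0 else measure_pmf.expectation p g / \<mu> * (real r + real R))"
  using \<open>r \<le> R\<close>
proof (induction m arbitrary: r)
  case (Suc m)
  define c where "c = measure_pmf.expectation p g / \<mu>"
  define \<Phi> where "\<Phi> s = (if s = 0 then 0 else c * (real s + real R))" for s :: nat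
  have c: "0 \<le> c"
    unfolding c_def using g_nonneg \<mu>_pos by (simp add: integral_nonneg_AE)
  then have \<Phi>_nonneg: "0 \<le> \<Phi> s" for s
    by (simp add: \<Phi>_def)
  have \<Phi>_int: "integrable p (\<lambda>k. \<Phi> (r - k))"
    using c by (intro measure_pmf.integrable_const_bound[where B = "c * (real r + real R)"])
      (auto simp: \<Phi>_def \<Phi>_nonneg intro!: mult_left_mono)
  show ?case
  proof (cases "r = 0")
    case False
    have "(\<integral>\<^sup>+ks. cut_sum g ks r \<partial>iid_list (Suc m) p)
        = (\<integral>\<^sup>+k. \<integral>\<^sup>+ks. ennreal (g k) + cut_sum g ks (r - k) \<partial>iid_list m p \<partial>p)"
      using False by (simp add: g_nonneg cut_sum_nonneg)
    also have "\<dots> \<le> (\<integral>\<^sup>+k. ennreal (g k + \<Phi> (r - k)) \<partial>p)"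
    proof (rule nn_integral_mono)
      fix k
      have "(\<integral>\<^sup>+ks. cut_sum g ks (r - k) \<partial>iid_list m p) \<le> \<Phi> (r - k)"
        unfolding \<Phi>_def c_def using Suc.prems by (intro Suc.IH) simp
      then show "(\<integral>\<^sup>+ks. ennreal (g k) + cut_sum g ks (r - k) \<partial>iid_list m p)
          \<le> ennreal (g k + \<Phi> (r - k))"
        by (subst nn_integral_add)
          (auto simp: measure_pmf.emeasure_space_1 g_nonneg \<Phi>_nonneg intro: add_left_mono)
    qed
    also have "\<dots> = ennreal (measure_pmf.expectation p (\<lambda>k. g k + \<Phi> (r - k)))"
      using g_int \<Phi>_int by (intro nn_integral_eq_integral) (simp_all add: g_nonneg \<Phi>_nonneg)
    also have "\<dots> = ennreal (measure_pmf.expectation p g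
        + measure_pmf.expectation p (\<lambda>k. if r \<le> k then 0 else c * (real (r - k) + real R)))"
      using g_int \<Phi>_int by (simp add: \<Phi>_def)
    also have "\<dots> \<le> ennreal (c * (real r + real R))"
      using expectation_potential_step[of g p R r] g_nonneg \<mu>_pos Suc.prems
      unfolding c_def \<mu>_def by (intro ennreal_leI) simp
    finally show ?thesis
      using False by (simp add: c_def)
  qed simp
qed simp

definition long_length :: "real \<Rightarrow> nat \<Rightarrow> real" where
  "long_length t k = (if t \<le> real k then real k else 0)"

lemma long_length_nonneg [simp]: "0 \<le> long_length t k"
  by (simp add: long_length_def)

lemma code_length_long_fragments_le:
  assumes t: "1 \<le> t" and M: "M \<in> set_pmf (keep d (frags ks xs))"
  shows "2 * real (length (mset_code (image_mset snd (filter_mset (\<lambda>f. t \<le> real (fst f)) M))))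
           \<le> 6 * cut_sum (long_length t) ks (length xs)"
proof -
  define G where "G f = (if t \<le> real (fst f) then 4 * real (length (snd f)) + 2 else 0)"
    for f :: "nat \<times> bool list"
  have "2 * real (length (mset_code (image_mset snd (filter_mset (\<lambda>f. t \<le> real (fst f)) M))))
      = (\<Sum>f\<in>#M. G f)"
    unfolding length_mset_code G_def by (induction M) (auto simp: algebra_simps)
  also have "\<dots> \<le> (\<Sum>f\<in>#mset (frags ks xs). G f)"
    by (rule sum_mset_mono_subseteq[OF keep_subseteq[OF M]]) (simp add: G_def)
  also have "\<dots> \<le> (\<Sum>f\<in>#mset (frags ks xs). 6 * long_length t (fst f))"
  proof (rule sum_mset_mono)
    fix f
    assume "f \<in># mset (frags ks xs)"
    then have "length (snd f) \<le> fst f"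
      using length_snd_frags_le[of f ks xs] by simp
    then show "G f \<le> 6 * long_length t (fst f)"
      using t by (simp add: G_def long_length_def)
  qed
  also have "\<dots> = 6 * cut_sum (long_length t) ks (length xs)"
    by (simp add: cut_sum_length_eq sum_list_const_mult sum_mset_sum_list flip: mset_map)
  finally show ?thesis .
qed

lemma entropy_Y_ge_le_cut_sum:
  fixes P :: "nat \<Rightarrow> bool list pmf" and J L n :: nat
  defines "t \<equiv> real J / real L * log 2 (real n)"
  assumes input: "set_pmf (P n) \<subseteq> {xs. length xs = n}" and t: "1 \<le> t"
  shows "ennreal (entropy_pmf (Y_ge P Nd d J L n))
           \<le> 6 * (\<integral>\<^sup>+ks. cut_sum (long_length t) ks n \<partial>iid_list n (Nd n)) + 1"
proof -
  let ?Y = "Y_ge P Nd d J L n"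
  let ?cost = "\<lambda>M. real (2 * length (mset_code M) + 1)"
  have fin: "finite (set_pmf ?Y)"
    using input by (rule finite_set_pmf_Y_ge)
  have "ennreal (entropy_pmf ?Y) \<le> ennreal (\<Sum>M\<in>set_pmf ?Y. ?cost M * pmf ?Y M)"
    using entropy_pmf_le_code_length[OF fin inj_on_subset[OF inj_mset_code subset_UNIV]]
    by (auto intro!: ennreal_leI simp: mult.commute)
  also have "\<dots> = (\<Sum>M\<in>set_pmf ?Y. ennreal (?cost M) * pmf ?Y M)"
    by (subst sum_ennreal[symmetric]) (simp_all add: ennreal_mult)
  also have "\<dots> = (\<integral>\<^sup>+M. ?cost M \<partial>?Y)"
    using fin by (simp add: nn_integral_measure_pmf_finite)
  also have "\<dots> = (\<integral>\<^sup>+x. \<integral>\<^sup>+ks. \<integral>\<^sup>+M.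
         ?cost (image_mset snd (filter_mset (\<lambda>f. t \<le> real (fst f)) M))
       \<partial>keep d (frags ks x) \<partial>iid_list n (Nd n) \<partial>P n)"
    unfolding Y_ge_def t_def by simp
  also have "\<dots> \<le> (\<integral>\<^sup>+x. \<integral>\<^sup>+ks. \<integral>\<^sup>+M. 6 * cut_sum (long_length t) ks n + 1
       \<partial>keep d (frags ks x) \<partial>iid_list n (Nd n) \<partial>P n)"
  proof (intro nn_integral_mono_AE AE_pmfI ennreal_leI)
    fix x ks M
    assume "x \<in> set_pmf (P n)" and "M \<in> set_pmf (keep d (frags ks x))"
    then show "?cost (image_mset snd (filter_mset (\<lambda>f. t \<le> real (fst f)) M))
        \<le> 6 * cut_sum (long_length t) ks n + 1"
      using input code_length_long_fragments_le[OF t] by fastforce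
  qed
  also have "\<dots> = 6 * (\<integral>\<^sup>+ks. cut_sum (long_length t) ks n \<partial>iid_list n (Nd n)) + 1"
    by (simp add: measure_pmf.emeasure_space_1 cut_sum_nonneg ennreal_mult nn_integral_add
        nn_integral_cmult)
  finally show ?thesis .
qed

lemma long_length_le_square_div: "0 < t \<Longrightarrow> long_length t k \<le> (real k)\<^sup>2 / t"
  by (auto simp: long_length_def field_simps power2_eq_square intro: mult_left_mono)

lemma diff_square_div_le_min:
  assumes "0 < n"
  shows "real k - (real k)\<^sup>2 / real n \<le> real (min k n)"
proof -
  have "0 \<le> (real k)\<^sup>2 - 2 * real k * real n + (real n)\<^sup>2"
    using zero_le_power2[of "real k - real n"] by (simp add: power2_diff)
  moreover have "0 \<le> real k * real n"
    by simp
  ultimately have "real k * real n - (real k)\<^sup>2 \<le> (real n)\<^sup>2"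
    by linarith
  then show ?thesis
    using assms by (auto simp: min_def field_simps power2_eq_square)
qed

lemma integrable_of_nat_of_square:
  "integrable (measure_pmf p) (\<lambda>k. (real k)\<^sup>2) \<Longrightarrow> integrable p real"
  by (erule Bochner_Integration.integrable_bound)
    (auto simp: power2_eq_square le_square simp flip: of_nat_mult)

lemma integrable_long_length:
  "integrable (measure_pmf p) (\<lambda>k. (real k)\<^sup>2) \<Longrightarrow> integrable p (long_length t)"
  by (drule integrable_of_nat_of_square, erule Bochner_Integration.integrable_bound)
    (auto simp: long_length_def)

lemma expectation_long_length_le:
  assumes sq_int: "integrable (measure_pmf p) (\<lambda>k. (real k)\<^sup>2)" and t: "0 < t"
  shows "measure_pmf.expectation p (long_length t)
           \<le> measure_pmf.expectation p (\<lambda>k. (real k)\<^sup>2) / t"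
proof -
  have "measure_pmf.expectation p (long_length t)
      \<le> measure_pmf.expectation p (\<lambda>k. (real k)\<^sup>2 / t)"
    using t sq_int integrable_long_length[OF sq_int]
    by (intro integral_mono long_length_le_square_div) auto
  then show ?thesis
    by simp
qed

lemma expectation_min_ge:
  assumes sq_int: "integrable (measure_pmf p) (\<lambda>k. (real k)\<^sup>2)" and n: "0 < n"
  shows "measure_pmf.expectation p real - measure_pmf.expectation p (\<lambda>k. (real k)\<^sup>2) / real n
           \<le> measure_pmf.expectation p (\<lambda>k. real (min k n))"
proof -
  have min_int: "integrable p (\<lambda>k. real (min k n))"
    by (intro measure_pmf.integrable_const_bound[where B = "real n"]) auto
  have "measure_pmf.expectation p (\<lambda>k. real k - (real k)\<^sup>2 / real n)
      \<le> measure_pmf.expectation p (\<lambda>k. real (min k n))"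
    using n integrable_of_nat_of_square[OF sq_int] sq_int min_int
    by (intro integral_mono diff_square_div_le_min) auto
  then show ?thesis
    using integrable_of_nat_of_square[OF sq_int] sq_int by simp
qed

lemma entropy_Y_ge_le_tail:
  fixes P :: "nat \<Rightarrow> bool list pmf" and Nd :: "nat \<Rightarrow> nat pmf" and J L n :: nat
  defines "t \<equiv> real J / real L * log 2 (real n)"
    and "\<mu> \<equiv> measure_pmf.expectation (Nd n) (\<lambda>k. real (min k n))"
  assumes input: "set_pmf (P n) \<subseteq> {xs. length xs = n}" and t: "1 \<le> t"
    and long_int: "integrable (Nd n) (long_length t)" and \<mu>_pos: "0 < \<mu>"
  shows "entropy_pmf (Y_ge P Nd d J L n)
           \<le> 12 * real n * (measure_pmf.expectation (Nd n) (long_length t) / \<mu>) + 1"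
proof -
  have n: "0 < n"
    using t by (cases "n = 0") (simp_all add: t_def log_def)
  define x where "x = measure_pmf.expectation (Nd n) (long_length t) / \<mu> * (real n + real n)"
  have x: "0 \<le> x"
    unfolding x_def using \<mu>_pos by simp
  have "ennreal (entropy_pmf (Y_ge P Nd d J L n))
      \<le> 6 * (\<integral>\<^sup>+ks. cut_sum (long_length t) ks n \<partial>iid_list n (Nd n)) + 1"
    using input t unfolding t_def by (rule entropy_Y_ge_le_cut_sum)
  also have "\<dots> \<le> 6 * ennreal x + 1"
    using nn_integral_cut_sum_le[of "long_length t" "Nd n" n n n] long_int \<mu>_pos n
    unfolding x_def \<mu>_def by (intro add_right_mono mult_left_mono) auto
  also have "\<dots> = ennreal (6 * x + 1)"
    using x by (simp add: ennreal_mult)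
  finally have "ennreal (entropy_pmf (Y_ge P Nd d J L n)) \<le> ennreal (6 * x + 1)" .
  then have "entropy_pmf (Y_ge P Nd d J L n) \<le> 6 * x + 1"
    using x by (subst (asm) ennreal_le_iff) simp_all
  then show ?thesis
    by (simp add: x_def algebra_simps)
qed

lemma entropy_Y_ge_le:
  fixes P :: "nat \<Rightarrow> bool list pmf" and Nd :: "nat \<Rightarrow> nat pmf" and J L n :: nat and C :: real
  defines "t \<equiv> real J / real L * log 2 (real n)"
    and "E1 \<equiv> measure_pmf.expectation (Nd n) real"
  assumes input: "set_pmf (P n) \<subseteq> {xs. length xs = n}" and t: "1 \<le> t"
    and sq_int: "integrable (Nd n) (\<lambda>k. (real k)\<^sup>2)"
    and sq_le: "measure_pmf.expectation (Nd n) (\<lambda>k. (real k)\<^sup>2) \<le> C"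
    and den: "C / real n < E1"
  shows "entropy_pmf (Y_ge P Nd d J L n) \<le> 12 * real n * (C / t) / (E1 - C / real n) + 1"
proof -
  define \<mu> where "\<mu> = measure_pmf.expectation (Nd n) (\<lambda>k. real (min k n))"
  define Eg where "Eg = measure_pmf.expectation (Nd n) (long_length t)"
  have n: "0 < n"
    using t by (cases "n = 0") (simp_all add: t_def log_def)
  have "Eg \<le> measure_pmf.expectation (Nd n) (\<lambda>k. (real k)\<^sup>2) / t"
    unfolding Eg_def using t by (intro expectation_long_length_le sq_int) simp
  also have "\<dots> \<le> C / t"
    using sq_le t by (simp add: divide_right_mono)
  finally have Eg_le: "Eg \<le> C / t" .
  have "E1 - C / real n \<le> E1 - measure_pmf.expectation (Nd n) (\<lambda>k. (real k)\<^sup>2) / real n"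
    using sq_le by (simp add: divide_right_mono)
  also have "\<dots> \<le> \<mu>"
    unfolding E1_def \<mu>_def using n by (rule expectation_min_ge[OF sq_int])
  finally have \<mu>_ge: "E1 - C / real n \<le> \<mu>" .
  have Eg_nonneg: "0 \<le> Eg"
    unfolding Eg_def by simp
  have "entropy_pmf (Y_ge P Nd d J L n) \<le> 12 * real n * (Eg / \<mu>) + 1"
    using entropy_Y_ge_le_tail[where P = P and n = n] input t integrable_long_length[OF sq_int]
      \<mu>_ge den
    unfolding t_def Eg_def \<mu>_def by simp
  also have "\<dots> \<le> 12 * real n * (C / t / (E1 - C / real n)) + 1"
    using Eg_le Eg_nonneg \<mu>_ge den by (intro add_right_mono mult_left_mono frac_le) auto
  finally show ?thesis
    by simp
qed

lemma entropy_Y_ge_div_le: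
  fixes P :: "nat \<Rightarrow> bool list pmf" and Nd :: "nat \<Rightarrow> nat pmf" and J L n :: nat and B :: real
  defines "l \<equiv> log 2 (real n)" and "E1 \<equiv> measure_pmf.expectation (Nd n) real"
  assumes input: "set_pmf (P n) \<subseteq> {xs. length xs = n}"
    and sq_int: "integrable (Nd n) (\<lambda>k. (real k)\<^sup>2)"
    and B: "measure_pmf.expectation (Nd n) (\<lambda>k. (real k / l)\<^sup>2) \<le> B"
    and n: "2 \<le> n" and L: "1 \<le> L" "L < J"
    and den: "0 < E1 / l - B * (l / real n)"
  shows "entropy_pmf (Y_ge P Nd d J L n) / real n
           \<le> 12 * B * (real L / real J) / (E1 / l - B * (l / real n)) + 1 / real n"
proof -
  have l: "1 \<le> l"
    using n by (simp add: l_def)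
  have sq_le: "measure_pmf.expectation (Nd n) (\<lambda>k. (real k)\<^sup>2) \<le> B * l\<^sup>2"
    using B l by (simp add: field_simps)
  have den': "B * l\<^sup>2 / real n < E1"
    using den l by (simp add: field_simps power2_eq_square)
  have "1 * 1 \<le> real J / real L * l"
    using l L by (intro mult_mono) simp_all
  then have "entropy_pmf (Y_ge P Nd d J L n)
      \<le> 12 * real n * (B * l\<^sup>2 / (real J / real L * l)) / (E1 - B * l\<^sup>2 / real n) + 1"
    using entropy_Y_ge_le[where P = P and n = n and C = "B * l\<^sup>2"] input sq_int sq_le den'
    unfolding E1_def l_def by simp
  also have "\<dots> = 12 * real n * (B * (real L / real J) * l) / (l * (E1 / l - B * (l / real n))) + 1"
  proof -
    have "B * l\<^sup>2 / (real J / real L * l) = B * (real L / real J) * l"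
      using l L by (simp add: power2_eq_square)
    moreover have "E1 - B * l\<^sup>2 / real n = l * (E1 / l - B * (l / real n))"
      using l by (simp add: right_diff_distrib power2_eq_square)
    ultimately show ?thesis
      by simp
  qed
  also have "\<dots> = real n * (12 * B * (real L / real J) / (E1 / l - B * (l / real n)) + 1 / real n)"
    using l n by (simp add: distrib_left)
  finally show ?thesis
    using n by (simp add: pos_divide_le_eq mult.commute)
qed

lemma limsup_entropy_Y_ge_le:
  fixes P :: "nat \<Rightarrow> bool list pmf" and Nd :: "nat \<Rightarrow> nat pmf" and \<alpha> B :: real and J L :: nat
  assumes input: "\<And>n. set_pmf (P n) \<subseteq> {xs. length xs = n}"
    and sq_int: "\<And>n. integrable (measure_pmf (Nd n)) (\<lambda>k. (real k)\<^sup>2)"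
    and alpha_pos: "0 < \<alpha>"
    and alpha: "(\<lambda>n. log 2 (real n) / measure_pmf.expectation (Nd n) real) \<longlonglongrightarrow> \<alpha>"
    and B: "\<And>n. 2 \<le> n \<Longrightarrow> measure_pmf.expectation (Nd n) (\<lambda>k. (real k / log 2 (real n))\<^sup>2) \<le> B"
    and L: "1 \<le> L" "L < J"
  shows "limsup (\<lambda>n. ereal (entropy_pmf (Y_ge P Nd d J L n) / real n))
           \<le> ereal (12 * B * \<alpha> * (real L / real J))"
proof -
  define v where "v n = measure_pmf.expectation (Nd n) real / log 2 (real n)
    - B * (log 2 (real n) / real n)" for n
  define u where "u n = 12 * B * (real L / real J) / v n + 1 / real n" for n
  have "v \<longlonglongrightarrow> inverse \<alpha> - B * 0"
    unfolding v_def using tendsto_inverse[OF alpha] alpha_pos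
    by (intro tendsto_diff tendsto_mult tendsto_const lim_log_over_n) simp_all
  then have v_lim: "v \<longlonglongrightarrow> inverse \<alpha>"
    by simp
  have "u \<longlonglongrightarrow> 12 * B * (real L / real J) / inverse \<alpha> + 0"
    unfolding u_def using alpha_pos
    by (intro tendsto_add tendsto_divide tendsto_const v_lim lim_1_over_n) simp
  then have u_lim: "u \<longlonglongrightarrow> 12 * B * \<alpha> * (real L / real J)"
    by (simp add: divide_inverse ac_simps)
  have v_pos: "eventually (\<lambda>n. 0 < v n) sequentially"
    using alpha_pos by (intro order_tendstoD(1)[OF v_lim]) simp
  have "eventually (\<lambda>n. entropy_pmf (Y_ge P Nd d J L n) / real n \<le> u n) sequentially"
    using eventually_ge_at_top[of "2::nat"] v_pos
  proof eventually_elim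
    case (elim n)
    then show ?case
      unfolding u_def v_def
      using entropy_Y_ge_div_le[where P = P and n = n] input sq_int B L
      by (simp add: v_def)
  qed
  then have "limsup (\<lambda>n. ereal (entropy_pmf (Y_ge P Nd d J L n) / real n))
      \<le> limsup (\<lambda>n. ereal (u n))"
    by (intro Limsup_mono) simp
  also have "\<dots> = ereal (12 * B * \<alpha> * (real L / real J))"
    using u_lim by (intro lim_imp_Limsup) simp_all
  finally show ?thesis .
qed

theorem lemma4:
  fixes P :: "nat \<Rightarrow> bool list pmf" and Nd :: "nat \<Rightarrow> nat pmf"
    and d :: "nat \<Rightarrow> real" and \<alpha> :: real
  assumes input: "\<And>n. set_pmf (P n) \<subseteq> {xs. length xs = n}"
    and pos: "\<And>n. set_pmf (Nd n) \<subseteq> {0<..}"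
    and d01: "\<And>k. 0 \<le> d k \<and> d k \<le> 1"
    and int2: "\<And>n. integrable (measure_pmf (Nd n)) (\<lambda>k. (real k)\<^sup>2)"
    and alpha_pos: "0 < \<alpha>"
    and alpha: "(\<lambda>n. log 2 (real n) / measure_pmf.expectation (Nd n) real) \<longlonglongrightarrow> \<alpha>"
    and bdd: "\<exists>B. \<forall>n\<ge>2.
         measure_pmf.expectation (Nd n) (\<lambda>k. real k / log 2 (real n)) \<le> B \<and>
         measure_pmf.expectation (Nd n) (\<lambda>k. (real k / log 2 (real n))\<^sup>2) \<le> B"
  shows "\<exists>S::real. \<forall>J L :: nat. 1 \<le> L \<longrightarrow> L < J \<longrightarrow> (\<forall>\<delta>>0.
           limsup (\<lambda>n. ereal (entropy_pmf (Y_ge P Nd d J L n) / real n))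
             \<le> ereal (2 * (S * sqrt (real L / real J) + \<delta>)))"
proof -
  obtain B where B: "\<And>n. 2 \<le> n \<Longrightarrow>
      measure_pmf.expectation (Nd n) (\<lambda>k. (real k / log 2 (real n))\<^sup>2) \<le> B"
    using bdd by blast
  have "0 \<le> measure_pmf.expectation (Nd 2) (\<lambda>k. (real k / log 2 (real (2::nat)))\<^sup>2)"
    by (intro integral_nonneg_AE) auto
  then have B_nonneg: "0 \<le> B"
    using B[of 2] by linarith
  show ?thesis
  proof (intro exI[of _ "6 * B * \<alpha>"] allI impI)
    fix J L :: nat and \<delta> :: real
    assume L: "1 \<le> L" "L < J" and "0 < \<delta>"
    define r where "r = real L / real J"
    have "r \<le> sqrt r"
      using L by (intro le_sqrt_self) (simp_all add: r_def)
    then have "B * \<alpha> * r \<le> B * \<alpha> * sqrt r"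
      using B_nonneg alpha_pos by (intro mult_left_mono) simp_all
    then have "12 * B * \<alpha> * r \<le> 2 * (6 * B * \<alpha> * sqrt r + \<delta>)"
      using \<open>0 < \<delta>\<close> by (simp add: algebra_simps)
    then show "limsup (\<lambda>n. ereal (entropy_pmf (Y_ge P Nd d J L n) / real n))
        \<le> ereal (2 * (6 * B * \<alpha> * sqrt (real L / real J) + \<delta>))"
      using limsup_entropy_Y_ge_le[OF input int2 alpha_pos alpha B L]
      unfolding r_def by (meson ereal_less_eq(3) order_trans)
  qed
qed

end
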